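(* Let $M=(M_{ij})$ be a reduced $n\times n$ matrix of integers with $M_{ij}>0$ for all $i,j$. If there exist $i\neq j$ with $M_{ii}=1$ and $M_{jj}=1$, then $\mathrm{Cat}(M)=\emptyset$.
   Context: For an $n\times n$ matrix $M=(m_{ij})$ with entries in the natural numbers, $\mathrm{Cat}(M)$ denotes the collection of categories $A$ with exactly $n$ distinct objects $x_1,\dots,x_n$ such that $|A(x_i,x_j)|=m_{ij}$ for all $i,j$, where $A(x_i,x_j)$ is the set of morphisms from $x_i$ to $x_j$. A matrix $M$ is called non-reduced if there exist $i\neq j$ such that $M_{ki}=M_{kj}$ and $M_{ik}=M_{jk}$ for all $k$ (row $i$ equals row $j$ and column $i$ equals column $j$); it is called reduced otherwise. *)

theory Defs
  imports Main
begin

text \<open>Hom i j is the set of morphisms from x_i to x_j, ident i the identity of x_i,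
  cmp i j k g f the composite g o f of f : x_i -> x_j and g : x_j -> x_k.\<close>

definition is_category ::
  "nat \<Rightarrow> (nat \<Rightarrow> nat \<Rightarrow> 'm set) \<Rightarrow> (nat \<Rightarrow> 'm)
     \<Rightarrow> (nat \<Rightarrow> nat \<Rightarrow> nat \<Rightarrow> 'm \<Rightarrow> 'm \<Rightarrow> 'm) \<Rightarrow> bool" where
  "is_category n Hom ident cmp \<longleftrightarrow>
     (\<forall>i<n. ident i \<in> Hom i i) \<and>
     (\<forall>i<n. \<forall>j<n. \<forall>k<n. \<forall>f\<in>Hom i j. \<forall>g\<in>Hom j k. cmp i j k g f \<in> Hom i k) \<and>
     (\<forall>i<n. \<forall>j<n. \<forall>f\<in>Hom i j. cmp i j j (ident j) f = f \<and> cmp i i j f (ident i) = f) \<and>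
     (\<forall>i<n. \<forall>j<n. \<forall>k<n. \<forall>l<n. \<forall>f\<in>Hom i j. \<forall>g\<in>Hom j k. \<forall>h\<in>Hom k l.
        cmp i k l h (cmp i j k g f) = cmp i j l (cmp j k l h g) f)"

definition Cat ::
  "nat \<Rightarrow> (nat \<Rightarrow> nat \<Rightarrow> nat) \<Rightarrow>
     ((nat \<Rightarrow> nat \<Rightarrow> 'm set) \<times> (nat \<Rightarrow> 'm) \<times> (nat \<Rightarrow> nat \<Rightarrow> nat \<Rightarrow> 'm \<Rightarrow> 'm \<Rightarrow> 'm)) set" where
  "Cat n M = {(Hom, ident, cmp). is_category n Hom ident cmp \<and>
       (\<forall>i<n. \<forall>j<n. finite (Hom i j) \<and> card (Hom i j) = M i j)}"

definition non_reduced :: "nat \<Rightarrow> (nat \<Rightarrow> nat \<Rightarrow> nat) \<Rightarrow> bool" where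
  "non_reduced n M \<longleftrightarrow> (\<exists>i<n. \<exists>j<n. i \<noteq> j \<and> (\<forall>k<n. M k i = M k j \<and> M i k = M j k))"

definition reduced :: "nat \<Rightarrow> (nat \<Rightarrow> nat \<Rightarrow> nat) \<Rightarrow> bool" where
  "reduced n M \<longleftrightarrow> \<not> non_reduced n M"

end

theory Submission
  imports Defs
begin

text \<open>If the endomorphism sets of two distinct objects x_i, x_j are singletons, then any
  f : x_i \<rightarrow> x_j and g : x_j \<rightarrow> x_i compose to identities in both orders, so x_i and x_j are
  isomorphic. Pre- and post-composition with this isomorphism give bijections
  A(x_k, x_i) \<cong> A(x_k, x_j) and A(x_i, x_k) \<cong> A(x_j, x_k); hence rows and columns i and j
  of M coincide, contradicting reducedness. Positivity of M provides f and g.\<close>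

context
  fixes n :: nat and Hom :: "nat \<Rightarrow> nat \<Rightarrow> 'm set" and ident :: "nat \<Rightarrow> 'm"
    and cmp :: "nat \<Rightarrow> nat \<Rightarrow> nat \<Rightarrow> 'm \<Rightarrow> 'm \<Rightarrow> 'm"
  assumes category: "is_category n Hom ident cmp"
begin

lemma ident_in_Hom: "i < n \<Longrightarrow> ident i \<in> Hom i i"
  using category unfolding is_category_def by simp

lemma cmp_in_Hom:
  "\<lbrakk>i < n; j < n; k < n; f \<in> Hom i j; g \<in> Hom j k\<rbrakk> \<Longrightarrow> cmp i j k g f \<in> Hom i k"
  using category unfolding is_category_def by simp

lemma cmp_ident_left: "\<lbrakk>i < n; j < n; f \<in> Hom i j\<rbrakk> \<Longrightarrow> cmp i j j (ident j) f = f"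
  using category unfolding is_category_def by simp

lemma cmp_ident_right: "\<lbrakk>i < n; j < n; f \<in> Hom i j\<rbrakk> \<Longrightarrow> cmp i i j f (ident i) = f"
  using category unfolding is_category_def by simp

lemma cmp_assoc:
  "\<lbrakk>i < n; j < n; k < n; l < n; f \<in> Hom i j; g \<in> Hom j k; h \<in> Hom k l\<rbrakk>
    \<Longrightarrow> cmp i k l h (cmp i j k g f) = cmp i j l (cmp j k l h g) f"
  using category unfolding is_category_def by simp

lemma endo_eq_ident_if_card_one:
  assumes "a < n" "card (Hom a a) = 1" "x \<in> Hom a a"
  shows "x = ident a"
proof -
  obtain y where "Hom a a = {y}"
    using assms(2) card_1_singletonE by blast
  then show ?thesis
    using assms ident_in_Hom[OF assms(1)] by simp
qed

context
  fixes i j f g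
  assumes ij: "i < n" "j < n"
    and f: "f \<in> Hom i j" and g: "g \<in> Hom j i"
    and gf: "cmp i j i g f = ident i" and fg: "cmp j i j f g = ident j"
begin

lemma bij_betw_postcompose_iso:
  assumes k: "k < n"
  shows "bij_betw (cmp k i j f) (Hom k i) (Hom k j)"
proof (rule bij_betw_byWitness[where f' = "cmp k j i g"])
  show "\<forall>h\<in>Hom k i. cmp k j i g (cmp k i j f h) = h"
  proof
    fix h assume h: "h \<in> Hom k i"
    have "cmp k j i g (cmp k i j f h) = cmp k i i (cmp i j i g f) h"
      using cmp_assoc[OF k ij ij(1) h f g] .
    also have "\<dots> = h"
      using gf cmp_ident_left k ij h by simp
    finally show "cmp k j i g (cmp k i j f h) = h" .
  qed
  show "\<forall>h\<in>Hom k j. cmp k i j f (cmp k j i g h) = h"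
  proof
    fix h assume h: "h \<in> Hom k j"
    have "cmp k i j f (cmp k j i g h) = cmp k j j (cmp j i j f g) h"
      using cmp_assoc[OF k ij(2,1,2) h g f] .
    also have "\<dots> = h"
      using fg cmp_ident_left k ij h by simp
    finally show "cmp k i j f (cmp k j i g h) = h" .
  qed
  show "cmp k i j f ` Hom k i \<subseteq> Hom k j"
    using cmp_in_Hom[OF k ij _ f] by blast
  show "cmp k j i g ` Hom k j \<subseteq> Hom k i"
    using cmp_in_Hom[OF k ij(2,1) _ g] by blast
qed

lemma bij_betw_precompose_iso:
  assumes k: "k < n"
  shows "bij_betw (\<lambda>h. cmp j i k h g) (Hom i k) (Hom j k)"
proof (rule bij_betw_byWitness[where f' = "\<lambda>h. cmp i j k h f"])
  show "\<forall>h\<in>Hom i k. cmp i j k (cmp j i k h g) f = h"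
  proof
    fix h assume h: "h \<in> Hom i k"
    have "cmp i j k (cmp j i k h g) f = cmp i i k h (cmp i j i g f)"
      using cmp_assoc[OF ij ij(1) k f g h] by simp
    also have "\<dots> = h"
      using gf cmp_ident_right k ij h by simp
    finally show "cmp i j k (cmp j i k h g) f = h" .
  qed
  show "\<forall>h\<in>Hom j k. cmp j i k (cmp i j k h f) g = h"
  proof
    fix h assume h: "h \<in> Hom j k"
    have "cmp j i k (cmp i j k h f) g = cmp j j k h (cmp j i j f g)"
      using cmp_assoc[OF ij(2,1,2) k g f h] by simp
    also have "\<dots> = h"
      using fg cmp_ident_right k ij h by simp
    finally show "cmp j i k (cmp i j k h f) g = h" .
  qed
  show "(\<lambda>h. cmp j i k h g) ` Hom i k \<subseteq> Hom j k"
    using cmp_in_Hom[OF ij(2,1) k g] by blast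
  show "(\<lambda>h. cmp i j k h f) ` Hom j k \<subseteq> Hom i k"
    using cmp_in_Hom[OF ij k f] by blast
qed

lemma card_Hom_eq_if_iso:
  assumes "k < n"
  shows "card (Hom k i) = card (Hom k j)" and "card (Hom i k) = card (Hom j k)"
  using bij_betw_same_card bij_betw_postcompose_iso bij_betw_precompose_iso assms by blast+

end

end

lemma non_reduced_if_Cat_nonempty:
  assumes "(Hom, ident, cmp) \<in> Cat n M" "i < n" "j < n" "i \<noteq> j"
    and "M i i = 1" "M j j = 1" "M i j > 0" "M j i > 0"
  shows "non_reduced n M"
proof -
  have category: "is_category n Hom ident cmp"
    and card: "\<And>a b. \<lbrakk>a < n; b < n\<rbrakk> \<Longrightarrow> card (Hom a b) = M a b"
    using assms(1) unfolding Cat_def by auto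
  obtain f g where f: "f \<in> Hom i j" and g: "g \<in> Hom j i"
    using card[OF assms(2,3)] card[OF assms(3,2)] assms(7,8) by fastforce
  have gf: "cmp i j i g f = ident i"
    using endo_eq_ident_if_card_one[OF category assms(2)] cmp_in_Hom[OF category assms(2,3,2) f g]
      card assms(2,5) by simp
  have fg: "cmp j i j f g = ident j"
    using endo_eq_ident_if_card_one[OF category assms(3)] cmp_in_Hom[OF category assms(3,2,3) g f]
      card assms(3,6) by simp
  have "M k i = M k j \<and> M i k = M j k" if "k < n" for k
    using card_Hom_eq_if_iso[OF category assms(2,3) f g gf fg that] card that assms(2,3)
    by simp
  then show ?thesis
    using assms(2-4) unfolding non_reduced_def by blast
qed

theorem mainTheorem8:
  fixes n :: nat and M :: "nat \<Rightarrow> nat \<Rightarrow> nat" and i j :: nat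
  assumes "reduced n M"
    and "\<forall>a<n. \<forall>b<n. M a b > 0"
    and "i < n" and "j < n" and "i \<noteq> j"
    and "M i i = 1" and "M j j = 1"
  shows "(Cat n M :: ((nat \<Rightarrow> nat \<Rightarrow> 'm set) \<times> (nat \<Rightarrow> 'm) \<times> (nat \<Rightarrow> nat \<Rightarrow> nat \<Rightarrow> 'm \<Rightarrow> 'm \<Rightarrow> 'm)) set) = {}"
proof (rule equals0I)
  fix A :: "(nat \<Rightarrow> nat \<Rightarrow> 'm set) \<times> (nat \<Rightarrow> 'm) \<times> (nat \<Rightarrow> nat \<Rightarrow> nat \<Rightarrow> 'm \<Rightarrow> 'm \<Rightarrow> 'm)"
  assume A: "A \<in> Cat n M"
  obtain Hom ident cmp where A_eq: "A = (Hom, ident, cmp)"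
    by (cases A) auto
  have "M i j > 0" "M j i > 0"
    using assms(2-4) by blast+
  then have "non_reduced n M"
    using non_reduced_if_Cat_nonempty[OF A[unfolded A_eq] assms(3-7)] by blast
  then show False
    using assms(1) unfolding reduced_def by blast
qed

end
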